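(* Let $b\in\mathbb{R}$. If $b\ge\frac16$, then for all $x\in(0,1)$ \[ \frac{\pi}{2}\cdot\frac{(1-x)^{1/2}}{(1+x)^b}<\arccos x<2^{b+1/2}\cdot\frac{(1-x)^{1/2}}{(1+x)^b}. \tag{$*$} \] Moreover, the right-hand inequality in $( * )$ holds for all $x\in(0,1)$ if and only if $b\ge\frac16$. If $b\le\frac2\pi-\frac12$, then both inequalities in $( * )$ are reversed for all $x\in(0,1)$, i.e. $2^{b+1/2}\frac{(1-x)^{1/2}}{(1+x)^b}<\arccos x<\frac{\pi}{2}\frac{(1-x)^{1/2}}{(1+x)^b}$; and the reversed left-hand inequality $\arccos x<\frac{\pi}{2}\frac{(1-x)^{1/2}}{(1+x)^b}$ holds for all $x\in(0,1)$ if and only if $b\le\frac2\pi-\frac12$.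
   Context: $\arccos$ denotes the principal inverse cosine with values in $[0,\pi]$. *)

theory Defs
  imports Complex_Main
begin

end

theory Submission
  imports Defs "HOL-Analysis.Complex_Transcendental" "HOL-Real_Asymp.Real_Asymp"
begin

(* Write x = cos (2 s) with s \<in> (0, pi/4).  Then arccos x = 2 s,
   (1 - x) powr (1/2) = sqrt 2 * sin s and (1 + x) powr b = 2 powr b * cos s powr (2 b), so after
   taking logarithms every inequality of the theorem compares
       G b s = ln (sin s) - ln s - 2 b ln (cos s)
   either with its limit 0 at s = 0+ (the bound with factor 2 powr (b + 1/2)) or with its value
   G b (pi/4) (the bound with factor pi/2).  The derivative dG b s = cot s - 1/s + 2 b tan s grows
   with b.  For b = 1/6 it is positive on (0, pi/4), which is the Cusa-type inequality
   sin u < u (2 + cos u) / 3; for b = 2/pi - 1/2 it is negative, which is the inequality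
   u (4/pi + (2 - 4/pi) cos u) < 2 sin u on (0, pi/2).  So G is strictly monotone in the two ranges
   of b, which gives the two double inequalities.  Sharpness: dG b s / s tends to 2 b - 1/3 as
   s -> 0+, so G is negative near 0 when b < 1/6; and dG b (pi/4) = 2 b + 1 - 4/pi, so G lies below
   G b (pi/4) just left of pi/4 when b > 2/pi - 1/2.
   The file proves the two trigonometric inequalities, then the reduction to G, the monotonicity
   and limit properties of G, and finally the four parts of the theorem. *)

lemma above_right_limit_if_increasing:
  fixes f :: "real \<Rightarrow> real"
  assumes lim: "(f \<longlongrightarrow> L) (at_right a)"
    and mono: "\<And>x y. a < x \<Longrightarrow> x < y \<Longrightarrow> y \<le> c \<Longrightarrow> f x < f y"
    and s: "a < s" "s \<le> c"
  shows "L < f s"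
proof -
  define m where "m = (a + s) / 2"
  have m: "a < m" "m < s" using s by (auto simp: m_def)
  have "eventually (\<lambda>t. f t \<le> f m) (at_right a)"
    unfolding eventually_at_right_field
    using m s by (intro exI[of _ m]) (auto intro!: less_imp_le mono)
  then have "L \<le> f m" by (intro tendsto_upperbound[OF lim]) auto
  also have "f m < f s" using m s by (intro mono) auto
  finally show ?thesis .
qed

lemma positive_if_rises_then_falls:
  fixes f f' :: "real \<Rightarrow> real"
  assumes "l \<le> m" "m \<le> r" "l < u" "u < r" "f l = 0" "f r = 0"
    and deriv: "\<And>t. l < t \<Longrightarrow> t < r \<Longrightarrow> (f has_real_derivative f' t) (at t)"
    and cont: "continuous_on {l..r} f"
    and rise: "\<And>t. l < t \<Longrightarrow> t < m \<Longrightarrow> 0 < f' t"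
    and fall: "\<And>t. m < t \<Longrightarrow> t < r \<Longrightarrow> f' t < 0"
  shows "0 < f u"
proof (cases "u \<le> m")
  case True
  have "f l < f u"
  proof (rule DERIV_pos_imp_increasing_open[OF \<open>l < u\<close>])
    fix t assume "l < t" "t < u"
    then show "\<exists>y. (f has_real_derivative y) (at t) \<and> 0 < y"
      using True assms(4) by (intro exI[of _ "f' t"]) (auto intro!: deriv rise)
  qed (rule continuous_on_subset[OF cont], use assms in auto)
  with \<open>f l = 0\<close> show ?thesis by simp
next
  case False
  have "f r < f u"
  proof (rule DERIV_neg_imp_decreasing_open[OF \<open>u < r\<close>])
    fix t assume "u < t" "t < r"
    then show "\<exists>y. (f has_real_derivative y) (at t) \<and> y < 0"
      using False assms(3) by (intro exI[of _ "f' t"]) (auto intro!: deriv fall)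
  qed (rule continuous_on_subset[OF cont], use assms in auto)
  with \<open>f r = 0\<close> show ?thesis by simp
qed

lemma cos_lt_one: "0 < t \<Longrightarrow> t \<le> pi \<Longrightarrow> cos t < 1"
  using cos_monotone_0_pi[of 0 t] by simp

(* Cusa-type inequality: sin u < u (2 + cos u) / 3 on (0, pi], since t/3 - sin t/(2 + cos t)
   has derivative (cos t - 1)^2 / (3 (2 + cos t)^2). *)
lemma sin_lt_cusa:
  assumes "0 < u" "u \<le> pi"
  shows "sin u < u * (2 + cos u) / 3"
proof -
  define q where "q t = t/3 - sin t / (2 + cos t)" for t :: real
  have cpos: "2 + cos t > 0" for t :: real using cos_ge_minus_one[of t] by linarith
  have "q 0 < q u"
  proof (rule DERIV_pos_imp_increasing_open[OF assms(1)])
    fix t :: real assume t: "0 < t" "t < u"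
    have d: "(q has_real_derivative 1/3 - (cos t * (2 + cos t) + sin t * sin t) / (2 + cos t)^2) (at t)"
      unfolding q_def [abs_def] using cpos[of t]
      by (auto intro!: derivative_eq_intros simp: power2_eq_square field_simps)
    have num: "cos t * (2 + cos t) + sin t * sin t = 2 * cos t + 1"
      using sin_cos_squared_add3[of t] by (simp add: algebra_simps)
    have "1/3 - (2 * c + 1) / (2 + c)^2 = (c - 1)^2 / (3 * (2 + c)^2)" if "2 + c > 0" for c :: real
      using that by (simp add: divide_simps) (simp add: power2_eq_square algebra_simps)
    then have "1/3 - (cos t * (2 + cos t) + sin t * sin t) / (2 + cos t)^2
               = (cos t - 1)^2 / (3 * (2 + cos t)^2)"
      unfolding num using cpos by simp
    also have "\<dots> > 0" using cos_lt_one[of t] t assms cpos[of t] by simp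
    finally show "\<exists>y. (q has_real_derivative y) (at t) \<and> 0 < y" using d by blast
  next
    show "continuous_on {0..u} q" unfolding q_def using cpos
      by (intro continuous_intros) (auto, metis cpos less_irrefl)
  qed
  then show ?thesis using cpos[of u] by (simp add: q_def field_simps)
qed

lemma deriv_sin_over_cos_combination:
  fixes a t :: real
  assumes "a + (2 - a) * cos t \<noteq> 0"
  shows "((\<lambda>t. 2 * sin t / (a + (2 - a) * cos t) - t) has_real_derivative
     (1 - cos t) * ((2 - a)^2 * cos t - (a^2 + 2 * a - 4)) / (a + (2 - a) * cos t)^2) (at t)"
proof -
  define D where "D = a + (2 - a) * cos t"
  have "2 * cos t * D + 2 * (2 - a) * sin t^2 - D^2
        = (1 - cos t) * ((2 - a)^2 * cos t - (a^2 + 2 * a - 4))"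
    unfolding D_def sin_squared_eq by algebra
  then have "(2 * cos t * D + 2 * (2 - a) * sin t^2) / D^2 - 1
             = (1 - cos t) * ((2 - a)^2 * cos t - (a^2 + 2 * a - 4)) / D^2"
    using assms by (simp add: D_def field_simps)
  moreover have "((\<lambda>t. 2 * sin t / (a + (2 - a) * cos t) - t) has_real_derivative
                  (2 * cos t * D + 2 * (2 - a) * sin t^2) / D^2 - 1) (at t)"
    using assms unfolding D_def by (auto intro!: derivative_eq_intros simp: power2_eq_square)
  ultimately show ?thesis by (simp add: D_def)
qed

(* The chord-type bound u (4/pi + (2 - 4/pi) cos u) < 2 sin u on (0, pi/2): the function
   2 sin t / (a + (2 - a) cos t) - t with a = 4/pi vanishes at 0 and pi/2, first rises, then falls. *)
lemma sin_gt_cos_interpolation: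
  assumes "0 < u" "u < pi/2"
  shows "u * (4/pi + (2 - 4/pi) * cos u) < 2 * sin u"
proof -
  define a where "a = 4/pi"
  define D where "D t = a + (2 - a) * cos t" for t
  define c where "c = (a^2 + 2 * a - 4) / (2 - a)^2"
  (* the derivative changes sign where cos t = c; 0 < c < 1 holds since sqrt 5 - 1 < a < 4/3 *)
  have pi_bounds: "3 < pi" "pi < 3.15" using pi_approx pi_gt3 by auto
  have a: "1 < a" "a < 4/3" using pi_bounds by (auto simp: a_def field_simps)
  have "a^2 + 2 * a - 4 > 0"
  proof -
    have "pi * pi < 3.15 * pi" using pi_bounds by (intro mult_strict_right_mono) auto
    then have "4 * pi^2 < 16 + 8 * pi" using pi_bounds unfolding power2_eq_square by linarith
    then have "(16 + 8 * pi - 4 * pi^2) / pi^2 > 0" by simp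
    moreover have "(16 + 8 * pi - 4 * pi^2) / pi^2 = a^2 + 2 * a - 4"
      using pi_bounds by (simp add: a_def field_simps power2_eq_square)
    ultimately show ?thesis by simp
  qed
  moreover have "a^2 + 2 * a - 4 < (2 - a)^2" using a by (simp add: power2_eq_square algebra_simps)
  ultimately have c: "0 < c" "c < 1" using a by (auto simp: c_def)
  then have m: "0 < arccos c" "arccos c < pi/2" "cos (arccos c) = c"
    using arccos_lt_bounded[of c] arccos_less_arccos[of 0 c] by auto
  have Dpos: "0 < D t" if "0 \<le> t" "t \<le> pi/2" for t
  proof -
    have "0 \<le> (2 - a) * cos t" using a cos_ge_zero[of t] that by simp
    then show ?thesis using a by (simp add: D_def)
  qed
  have factor: "(1 - cos t) * ((2 - a)^2 * cos t - (a^2 + 2 * a - 4))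
                 = (2 - a)^2 * (1 - cos t) * (cos t - c)" for t
    using a by (simp add: c_def field_simps)
  define f' where "f' t = (1 - cos t) * ((2 - a)^2 * cos t - (a^2 + 2 * a - 4)) / (D t)^2" for t
  have deriv: "((\<lambda>t. 2 * sin t / D t - t) has_real_derivative f' t) (at t)"
    if "0 \<le> t" "t \<le> pi/2" for t
    using deriv_sin_over_cos_combination[of a t] Dpos[OF that] by (simp add: D_def f'_def)
  have "0 < 2 * sin u / D u - u"
  proof (rule positive_if_rises_then_falls[where f = "\<lambda>t. 2 * sin t / D t - t" and f' = f'
                                           and l = 0 and m = "arccos c" and r = "pi/2"])
    show "continuous_on {0..pi/2} (\<lambda>t. 2 * sin t / D t - t)"
      by (rule DERIV_continuous_on[OF has_field_derivative_at_within[OF deriv]]) auto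
    show "2 * sin (pi/2) / D (pi/2) - pi/2 = 0" using pi_bounds by (simp add: D_def a_def)
  next
    fix t assume t: "0 < t" "t < arccos c"
    then have "c < cos t" using m cos_monotone_0_pi[of t "arccos c"] by simp
    then show "0 < f' t" unfolding f'_def factor using cos_lt_one[of t] Dpos[of t] t m a by simp
  next
    fix t assume t: "arccos c < t" "t < pi/2"
    then have "cos t < c" using m cos_monotone_0_pi[of "arccos c" t] by simp
    then have "(2 - a)^2 * (1 - cos t) * (cos t - c) < 0"
      using cos_lt_one[of t] t m a by (intro mult_pos_neg) auto
    then show "f' t < 0" unfolding f'_def factor using Dpos[of t] t m by (simp add: divide_neg_pos)
  qed (use assms m deriv in auto)
  then show ?thesis using Dpos[of u] assms by (simp add: D_def a_def field_simps)
qed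

definition G :: "real \<Rightarrow> real \<Rightarrow> real" where
  "G b s = ln (sin s) - ln s - 2 * b * ln (cos s)"

definition dG :: "real \<Rightarrow> real \<Rightarrow> real" where
  "dG b s = cos s / sin s - 1 / s + 2 * b * (sin s / cos s)"

lemma arccos_bounds_iff_G:
  fixes b s :: real
  assumes s: "0 < s" "s < pi/4"
  defines "x \<equiv> cos (2 * s)"
  defines "Q \<equiv> (1 - x) powr (1/2) / (1 + x) powr b"
  shows "0 < x" and "x < 1"
    and "arccos x < 2 powr (b + 1/2) * Q \<longleftrightarrow> 0 < G b s"
    and "2 powr (b + 1/2) * Q < arccos x \<longleftrightarrow> G b s < 0"
    and "pi / 2 * Q < arccos x \<longleftrightarrow> G b s < G b (pi/4)"
    and "arccos x < pi / 2 * Q \<longleftrightarrow> G b (pi/4) < G b s"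
proof -
  have sc: "0 < sin s" "0 < cos s" using s by (auto intro!: sin_gt_zero cos_gt_zero)
  show x: "0 < x" "x < 1" unfolding x_def using s cos_lt_one[of "2 * s"] by (auto intro!: cos_gt_zero)
  have arccos_x: "arccos x = 2 * s" unfolding x_def using s by (intro arccos_cos) auto
  have one_minus: "1 - x = 2 * (sin s)^2" unfolding x_def by (simp add: cos_double_sin)
  have one_plus: "1 + x = 2 * (cos s)^2" unfolding x_def by (simp add: cos_double_cos)
  have Qpos: "0 < Q" unfolding Q_def using x by simp
  have "ln Q = (1/2) * ln (1 - x) - b * ln (1 + x)"
    unfolding Q_def using x by (simp add: ln_div ln_powr)
  also have "\<dots> = ln 2 / 2 + ln (sin s) - b * ln 2 - 2 * b * ln (cos s)"
    unfolding one_minus one_plus using sc by (simp add: ln_mult ln_realpow algebra_simps)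
  finally have lnQ: "ln Q = ln 2 / 2 + ln (sin s) - b * ln 2 - 2 * b * ln (cos s)" .
  have ln_arccos: "ln (arccos x) = ln 2 + ln s" unfolding arccos_x using s by (simp add: ln_mult)
  have ln_upper: "ln (2 powr (b + 1/2) * Q) = ln 2 + ln (sin s) - 2 * b * ln (cos s)"
    using Qpos lnQ by (simp add: ln_mult ln_powr algebra_simps)
  have ln_lower: "ln (pi / 2 * Q) = ln pi - ln 2 / 2 + ln (sin s) - b * ln 2 - 2 * b * ln (cos s)"
    using Qpos lnQ by (simp add: ln_mult ln_div algebra_simps)
  have G_quarter: "G b (pi/4) = b * ln 2 + 3/2 * ln 2 - ln pi"
  proof -
    have "ln (sqrt 2 / 2) = - ln 2 / 2" by (simp add: ln_div ln_sqrt)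
    moreover have "ln (pi/4) = ln pi - 2 * ln 2" by (simp add: ln_div ln_realpow[of 2 2, simplified])
    ultimately show ?thesis by (simp add: G_def sin_45 cos_45 algebra_simps)
  qed
  have A: "0 < arccos x" and R: "0 < 2 powr (b + 1/2) * Q" and L: "0 < pi / 2 * Q"
    using arccos_x s Qpos by auto
  show "arccos x < 2 powr (b + 1/2) * Q \<longleftrightarrow> 0 < G b s"
    using ln_less_cancel_iff[OF A R] ln_arccos ln_upper unfolding G_def by linarith
  show "2 powr (b + 1/2) * Q < arccos x \<longleftrightarrow> G b s < 0"
    using ln_less_cancel_iff[OF R A] ln_arccos ln_upper unfolding G_def by linarith
  show "pi / 2 * Q < arccos x \<longleftrightarrow> G b s < G b (pi/4)"
    using ln_less_cancel_iff[OF L A] ln_arccos ln_lower G_quarter unfolding G_def by linarith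
  show "arccos x < pi / 2 * Q \<longleftrightarrow> G b (pi/4) < G b s"
    using ln_less_cancel_iff[OF A L] ln_arccos ln_lower G_quarter unfolding G_def by linarith
qed

lemma cos_double_parametrisation:
  assumes "0 < x" "x < 1"
  obtains s where "0 < s" "s < pi/4" "x = cos (2 * s)"
proof
  have "0 < arccos x" "arccos x < pi/2"
    using assms arccos_lt_bounded[of x] arccos_less_arccos[of 0 x] by auto
  then show "0 < arccos x / 2" "arccos x / 2 < pi/4" by auto
  show "x = cos (2 * (arccos x / 2))" using assms by simp
qed

lemma G_has_derivative: "0 < s \<Longrightarrow> s < pi/2 \<Longrightarrow> (G b has_real_derivative dG b s) (at s)"
  unfolding G_def [abs_def] dG_def
  using sin_gt_zero[of s] cos_gt_zero[of s]
  by (auto intro!: derivative_eq_intros simp: field_simps)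

lemma G_increasing:
  assumes "0 < t" "t < s" "s < pi/2" "\<And>y. t < y \<Longrightarrow> y < s \<Longrightarrow> 0 < dG b y"
  shows "G b t < G b s"
proof (rule DERIV_pos_imp_increasing_open[OF assms(2)])
  fix y assume "t < y" "y < s"
  then show "\<exists>z. (G b has_real_derivative z) (at y) \<and> 0 < z"
    using assms G_has_derivative[of y b] by auto
next
  show "continuous_on {t..s} (G b)"
    by (rule DERIV_continuous_on[OF has_field_derivative_at_within[OF G_has_derivative]])
       (use assms in auto)
qed

lemma G_decreasing:
  assumes "0 < t" "t < s" "s < pi/2" "\<And>y. t < y \<Longrightarrow> y < s \<Longrightarrow> dG b y < 0"
  shows "G b s < G b t"
proof (rule DERIV_neg_imp_decreasing_open[OF assms(2)])
  fix y assume "t < y" "y < s"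
  then show "\<exists>z. (G b has_real_derivative z) (at y) \<and> z < 0"
    using assms G_has_derivative[of y b] by auto
next
  show "continuous_on {t..s} (G b)"
    by (rule DERIV_continuous_on[OF has_field_derivative_at_within[OF G_has_derivative]])
       (use assms in auto)
qed

lemma G_tendsto_zero: "(G b \<longlongrightarrow> 0) (at_right 0)"
proof -
  have "((\<lambda>s::real. ln (sin s) - ln s) \<longlongrightarrow> 0) (at_right 0)" by real_asymp
  moreover have "((\<lambda>s::real. ln (cos s)) \<longlongrightarrow> 0) (at_right 0)" by real_asymp
  ultimately have "((\<lambda>s. (ln (sin s) - ln s) - 2 * b * ln (cos s)) \<longlongrightarrow> 0 - 2 * b * 0) (at_right 0)"
    by (intro tendsto_intros)
  then show ?thesis by (simp add: G_def [abs_def])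
qed

(* Near 0 the derivative behaves like (2 b - 1/3) s; this makes 1/6 the critical exponent. *)
lemma dG_over_s_tendsto: "((\<lambda>s. dG b s / s) \<longlongrightarrow> 2 * b - 1/3) (at_right 0)"
proof -
  have cot_part: "((\<lambda>s::real. (cos s * s - sin s) / (s * s * sin s)) \<longlongrightarrow> -1/3) (at_right 0)"
    by real_asymp
  have tan_part: "((\<lambda>s::real. (sin s / cos s) / s) \<longlongrightarrow> 1) (at_right 0)" by real_asymp
  have lim: "((\<lambda>s. (cos s * s - sin s) / (s * s * sin s) + 2 * b * ((sin s / cos s) / s))
                          \<longlongrightarrow> -1/3 + 2 * b * 1) (at_right 0)"
    by (intro tendsto_add tendsto_mult tendsto_const cot_part tan_part)
  have "eventually (\<lambda>s. (cos s * s - sin s) / (s * s * sin s) + 2 * b * ((sin s / cos s) / s)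
                        = dG b s / s) (at_right 0)"
    unfolding eventually_at_right_field
  proof (intro exI[of _ "pi/2"] conjI allI impI)
    fix s :: real assume s: "0 < s" "s < pi/2"
    then have "0 < sin s" "0 < cos s" by (auto intro!: sin_gt_zero cos_gt_zero)
    with s show "(cos s * s - sin s) / (s * s * sin s) + 2 * b * ((sin s / cos s) / s)
                          = dG b s / s"
      by (simp add: dG_def field_simps)
  qed simp
  with lim show ?thesis by (simp add: tendsto_cong)
qed

lemma dG_mono_in_b:
  assumes "b' \<le> b" "0 < s" "s < pi/2"
  shows "dG b' s \<le> dG b s"
proof -
  have "0 \<le> sin s / cos s" using assms by (auto intro!: divide_nonneg_pos sin_ge_zero cos_gt_zero)
  then have "0 \<le> 2 * (b - b') * (sin s / cos s)" using assms by (intro mult_nonneg_nonneg) auto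
  moreover have "dG b s = dG b' s + 2 * (b - b') * (sin s / cos s)" by (simp add: dG_def algebra_simps)
  ultimately show ?thesis by linarith
qed

(* At b = 1/6 the derivative is positive on (0, pi/4): this is the Cusa-type inequality at 2 s. *)
lemma dG_sixth_pos:
  assumes "0 < s" "s < pi/4"
  shows "0 < dG (1/6) s"
proof -
  define S where "S = sin s"
  define C where "C = cos s"
  have SC: "0 < S" "0 < C" using assms by (auto simp: S_def C_def intro!: sin_gt_zero cos_gt_zero)
  have one: "S^2 + C^2 = 1" by (simp add: S_def C_def)
  define K where "K = 2 + (C^2 - S^2)"
  have "sin (2 * s) < (2 * s) * (2 + cos (2 * s)) / 3" using assms by (intro sin_lt_cusa) auto
  then have "2 * S * C < 2 * s * K / 3" by (simp add: S_def C_def K_def sin_double cos_double)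
  then have "3 * (S * C) < s * K" by linarith
  moreover have "K = 3 * C^2 + S^2" using one by (simp add: K_def)
  ultimately have key: "3 * (S * C) < s * (3 * C^2 + S^2)" by simp
  have "dG (1/6) s = (3 * s * C^2 - 3 * (S * C) + s * S^2) / (3 * s * S * C)"
    using SC assms by (simp add: dG_def S_def[symmetric] C_def[symmetric] field_simps power2_eq_square)
  also have "\<dots> > 0" using key SC assms by (intro divide_pos_pos) (auto simp: algebra_simps)
  finally show ?thesis .
qed

(* At b = 2/pi - 1/2 the derivative is negative on (0, pi/4): this is the interpolation bound at 2 s. *)
lemma dG_threshold_neg:
  assumes "0 < s" "s < pi/4"
  shows "dG (2/pi - 1/2) s < 0"
proof -
  define S where "S = sin s"
  define C where "C = cos s"
  define a where "a = 4/pi"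
  have SC: "0 < S" "0 < C" using assms by (auto simp: S_def C_def intro!: sin_gt_zero cos_gt_zero)
  have one: "S^2 + C^2 = 1" by (simp add: S_def C_def)
  have "(2 * s) * (4/pi + (2 - 4/pi) * cos (2 * s)) < 2 * sin (2 * s)"
    using assms by (intro sin_gt_cos_interpolation) auto
  then have "(2 * s) * (a * (S^2 + C^2) + (2 - a) * (C^2 - S^2)) < 2 * (2 * S * C)"
    using one by (simp add: S_def C_def a_def sin_double cos_double)
  then have key: "s * C^2 + (a - 1) * s * S^2 < S * C" by (simp add: algebra_simps)
  have "dG (2/pi - 1/2) s = (s * C^2 - S * C + (a - 1) * s * S^2) / (s * S * C)"
    using SC assms by (simp add: dG_def S_def[symmetric] C_def[symmetric] a_def field_simps power2_eq_square)
  also have "\<dots> < 0" using key SC assms by (intro divide_neg_pos) (auto simp: algebra_simps)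
  finally show ?thesis .
qed

lemma G_bounds_if_ge_sixth:
  assumes "1/6 \<le> b" "0 < s" "s < pi/4"
  shows "0 < G b s" and "G b s < G b (pi/4)"
proof -
  have pos: "0 < dG b y" if "0 < y" "y < pi/4" for y
    using dG_sixth_pos[OF that] dG_mono_in_b[OF assms(1), of y] that by simp
  have mono: "G b x < G b y" if "0 < x" "x < y" "y \<le> pi/4" for x y
    using that by (intro G_increasing pos) auto
  show "0 < G b s"
    using above_right_limit_if_increasing[where c = "pi/4", OF G_tendsto_zero mono] assms by auto
  show "G b s < G b (pi/4)" using mono assms by auto
qed

lemma G_bounds_if_le_threshold:
  assumes "b \<le> 2/pi - 1/2" "0 < s" "s < pi/4"
  shows "G b s < 0" and "G b (pi/4) < G b s"
proof -
  have neg: "dG b y < 0" if "0 < y" "y < pi/4" for y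
    using dG_threshold_neg[OF that] dG_mono_in_b[OF assms(1), of y] that by simp
  have mono: "- G b x < - G b y" if "0 < x" "x < y" "y \<le> pi/4" for x y
    using that by (simp, intro G_decreasing neg) auto
  have "((\<lambda>t. - G b t) \<longlongrightarrow> - 0) (at_right 0)" by (intro tendsto_minus G_tendsto_zero)
  from above_right_limit_if_increasing[where c = "pi/4", OF this mono] assms show "G b s < 0" by auto
  show "G b (pi/4) < G b s" using mono assms by auto
qed

(* For b < 1/6, dG b is negative near 0, so G is negative there. *)
lemma G_negative_somewhere:
  assumes "b < 1/6"
  obtains s where "0 < s" "s < pi/4" "G b s < 0"
proof -
  have "eventually (\<lambda>s. dG b s / s < 0) (at_right 0)"
    using assms by (intro order_tendstoD(2)[OF dG_over_s_tendsto]) auto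
  moreover have "eventually (\<lambda>s::real. 0 < s) (at_right 0)" by (simp add: eventually_at_right_less)
  ultimately have "eventually (\<lambda>s. dG b s < 0) (at_right 0)"
    by eventually_elim (simp add: divide_less_0_iff)
  then obtain d where d: "0 < d" "\<And>y. 0 < y \<Longrightarrow> y < d \<Longrightarrow> dG b y < 0"
    unfolding eventually_at_right_field by auto
  define s where "s = min d (pi/4) / 2"
  have s: "0 < s" "s < pi/4" "s < d" using d(1) by (auto simp: s_def min_def)
  have mono: "- G b x < - G b y" if "0 < x" "x < y" "y \<le> s" for x y
    using that s d by (simp, intro G_decreasing) auto
  have "((\<lambda>t. - G b t) \<longlongrightarrow> - 0) (at_right 0)" by (intro tendsto_minus G_tendsto_zero)
  from above_right_limit_if_increasing[where c = s, OF this mono] s have "G b s < 0" by auto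
  with s show ?thesis using that by blast
qed

(* For b > 2/pi - 1/2, dG b (pi/4) = 2 b + 1 - 4/pi > 0, so G is below G b (pi/4) just left of pi/4. *)
lemma G_below_quarter_somewhere:
  assumes "2/pi - 1/2 < b"
  obtains s where "0 < s" "s < pi/4" "G b s < G b (pi/4)"
proof -
  have "dG b (pi/4) = 1 - 4/pi + 2 * b" by (simp add: dG_def sin_45 cos_45)
  also have "\<dots> > 0" using assms by (simp add: algebra_simps)
  finally have "0 < dG b (pi/4)" .
  from DERIV_pos_inc_left[OF G_has_derivative this] obtain d where
    d: "0 < d" "\<And>h. 0 < h \<Longrightarrow> h < d \<Longrightarrow> G b (pi/4 - h) < G b (pi/4)"
    by auto
  define h where "h = min d (pi/4) / 2"
  have h: "0 < h" "h < d" "h < pi/4" using d(1) by (auto simp: h_def min_def)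
  show ?thesis using that[of "pi/4 - h"] d(2)[OF h(1,2)] h by auto
qed

lemma arccos_bounds_if_ge_sixth:
  assumes "1/6 \<le> b" "0 < x" "x < 1"
  shows "pi / 2 * ((1 - x) powr (1/2) / (1 + x) powr b) < arccos x \<and>
         arccos x < 2 powr (b + 1/2) * ((1 - x) powr (1/2) / (1 + x) powr b)"
proof -
  obtain s where s: "0 < s" "s < pi/4" "x = cos (2 * s)"
    using cos_double_parametrisation[OF assms(2,3)] .
  show ?thesis
    unfolding s(3) arccos_bounds_iff_G(3,5)[OF s(1,2)] using G_bounds_if_ge_sixth[OF assms(1) s(1,2)] by blast
qed

lemma arccos_bounds_if_le_threshold:
  assumes "b \<le> 2/pi - 1/2" "0 < x" "x < 1"
  shows "2 powr (b + 1/2) * ((1 - x) powr (1/2) / (1 + x) powr b) < arccos x \<and>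
         arccos x < pi / 2 * ((1 - x) powr (1/2) / (1 + x) powr b)"
proof -
  obtain s where s: "0 < s" "s < pi/4" "x = cos (2 * s)"
    using cos_double_parametrisation[OF assms(2,3)] .
  show ?thesis
    unfolding s(3) arccos_bounds_iff_G(4,6)[OF s(1,2)] using G_bounds_if_le_threshold[OF assms(1) s(1,2)] by blast
qed

lemma upper_bound_fails_below_sixth:
  assumes "b < 1/6"
  shows "\<exists>x. 0 < x \<and> x < 1 \<and> \<not> arccos x < 2 powr (b + 1/2) * ((1 - x) powr (1/2) / (1 + x) powr b)"
proof -
  obtain s where s: "0 < s" "s < pi/4" "G b s < 0" using G_negative_somewhere[OF assms] .
  show ?thesis
    using arccos_bounds_iff_G(1,2,3)[OF s(1,2)] s(3) by (intro exI[of _ "cos (2 * s)"]) auto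
qed

lemma lower_bound_fails_above_threshold:
  assumes "2/pi - 1/2 < b"
  shows "\<exists>x. 0 < x \<and> x < 1 \<and> \<not> arccos x < pi / 2 * ((1 - x) powr (1/2) / (1 + x) powr b)"
proof -
  obtain s where s: "0 < s" "s < pi/4" "G b s < G b (pi/4)" using G_below_quarter_somewhere[OF assms] .
  show ?thesis
    using arccos_bounds_iff_G(1,2,6)[OF s(1,2)] s(3) by (intro exI[of _ "cos (2 * s)"]) auto
qed

theorem theorem2:
  fixes b :: real
  shows "(b \<ge> 1/6 \<longrightarrow>
            (\<forall>x::real. 0 < x \<and> x < 1 \<longrightarrow>
               pi / 2 * ((1 - x) powr (1/2) / (1 + x) powr b) < arccos x \<and>
               arccos x < 2 powr (b + 1/2) * ((1 - x) powr (1/2) / (1 + x) powr b)))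
       \<and> ((\<forall>x::real. 0 < x \<and> x < 1 \<longrightarrow>
               arccos x < 2 powr (b + 1/2) * ((1 - x) powr (1/2) / (1 + x) powr b))
            \<longleftrightarrow> b \<ge> 1/6)
       \<and> (b \<le> 2 / pi - 1/2 \<longrightarrow>
            (\<forall>x::real. 0 < x \<and> x < 1 \<longrightarrow>
               2 powr (b + 1/2) * ((1 - x) powr (1/2) / (1 + x) powr b) < arccos x \<and>
               arccos x < pi / 2 * ((1 - x) powr (1/2) / (1 + x) powr b)))
       \<and> ((\<forall>x::real. 0 < x \<and> x < 1 \<longrightarrow>
               arccos x < pi / 2 * ((1 - x) powr (1/2) / (1 + x) powr b))
            \<longleftrightarrow> b \<le> 2 / pi - 1/2)"
  using arccos_bounds_if_ge_sixth[of b] arccos_bounds_if_le_threshold[of b]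
    upper_bound_fails_below_sixth[of b] lower_bound_fails_above_threshold[of b]
  by (meson not_le)

end
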